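(* Consider the one-stage ANC game described in the context with scalar control ($m=1$). Suppose that for every $x\in\mathbb{R}^n$ and $a\in\mathcal{A}$ the functions $u\mapsto\Sigma(F(x,u),u,a)$ and $u\mapsto\Sigma(F(x,0),u,a)$ are convex on $\mathbb{R}$ and continuously differentiable on $\mathbb{R}$ except possibly at finitely many points; let $U^d=U^d(x)$ be the set of such exceptional points. Let $\mathcal{G}=\{a_1,a_2\}\subset\mathcal{A}$ with $a_1\ne a_2$. (i) If for every $x,s$ there exists $\bar u\notin U^d$ such that $h^{x,s}_{a_1}(\bar u)=h^{x,s}_{a_2}(\bar u)$ and $h^{x,s}_i(\bar u)\ge h^{x,s}_a(\bar u)$ for all $i\in\mathcal{G}$, $a\notin\mathcal{G}$, and either $\frac{dh^{x,s}_{a_1}(\bar u)}{du}\cdot\frac{dh^{x,s}_{a_2}(\bar u)}{du}<0$ or $\frac{dh^{x,s}_{a_1}(\bar u)}{du}=\frac{dh^{x,s}_{a_2}(\bar u)}{du}=0$, then the game admits a non-pure saddle point $(u^*,p^* )$, $u^*\notin U^d$, with $p^*$ supported on $\mathcal{G}$. (ii) Conversely, if the game admits a non-pure saddle point $(u^*,p^* )$, $u^*\notin U^d$, with $p^*$ supported on $\mathcal{G}$, then there exists $\bar u\notin U^d$ such that $h^{x,s}_{a_1}(\bar u)=h^{x,s}_{a_2}(\bar u)$ and either $\frac{dh^{x,s}_{a_1}(\bar u)}{du}\cdot\frac{dh^{x,s}_{a_2}(\bar u)}{du}<0$ or $\frac{dh^{x,s}_{a_1}(\bar u)}{du}=\frac{dh^{x,s}_{a_2}(\bar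 u)}{du}=0$.
   Context: Setting (one-stage ANC game). Let $\mathcal{F}=\{1,\dots,|\mathcal{F}|\}$ be a finite set of transmission regimes and $\mathcal{A}=\{1,\dots,N\}$ a finite set of jammer actions. For each $a\in\mathcal{A}$ let $P(a)$ be an $|\mathcal{F}|\times|\mathcal{F}|$ row-stochastic matrix, and let $q\in[0,1]^{|\mathcal{F}|}$. Let $F:\mathbb{R}^n\times\mathbb{R}^m\to\mathbb{R}^n$, $\sigma^0:\mathbb{R}^n\times\mathbb{R}^m\to\mathbb{R}$, $\sigma^1:\mathbb{R}^n\to\mathbb{R}$, $g^0:\mathcal{A}\times\mathcal{F}\to\mathbb{R}$. For a plant state $x$ and regime $s$, the controller chooses $u\in\mathbb{R}^m$, the jammer chooses $p\in\mathcal{S}_{N-1}$ (unit simplex in $\mathbb{R}^N$); $a$ is drawn according to $p$, $s^+$ with $\mathrm{Pr}(s^+=i)=P_{si}(a)$, $b\in\{0,1\}$ with $\mathrm{Pr}(b=1\mid s^+)=q_{s^+}$, and $x^+=F(x,bu)$. Payoff $\Sigma(x^+,u,a)=\sigma^0(x,u)+\sigma^1(x^+)-g^0(a,s)$, with expectation $p'h^{x,s}(u)$ where $h^{x,s}_i(u)=(P(i)q)_s\Sigma(F(x,u),u,i)+(1-(P(i)q)_s)\Sigma(F(x,0),u,i)$, $(P(i)q)_s$ being the $s$-th entry of $P(i)q$. A saddle point is $(u^*,p^* )\in\mathbb{R}^m\times\mathcal{S}_{N-1}$ with $p'h^{x,s}(u^* )\le(p^* )'h^{x,s}(u^* )\le(p^*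 )'h^{x,s}(u)$ for all $u,p$. It is non-pure if $p^*$ has at least two positive components; "$p^*$ supported on $\mathcal{G}$" means $p^*_a=0$ for $a\notin\mathcal{G}$. *)

theory Defs
  imports "HOL-Analysis.Analysis"
begin

text \<open>One-stage ANC game. Jammer actions are 1..N, transmission regimes are 1..K.
  P a i j is the (i,j) entry of the row-stochastic matrix P(a); q j is the j-th entry of q.\<close>

text \<open>Payoff Sigma(x+,u,a) = sigma0(x,u) + sigma1(x+) - g0(a,s), for current state x and regime s.\<close>
definition Sig :: "('x \<Rightarrow> real \<Rightarrow> real) \<Rightarrow> ('x \<Rightarrow> real) \<Rightarrow> (nat \<Rightarrow> nat \<Rightarrow> real)
    \<Rightarrow> 'x \<Rightarrow> nat \<Rightarrow> 'x \<Rightarrow> real \<Rightarrow> nat \<Rightarrow> real" where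
  "Sig \<sigma>0 \<sigma>1 g0 x s xp u a = \<sigma>0 x u + \<sigma>1 xp - g0 a s"

definition Pq :: "nat \<Rightarrow> (nat \<Rightarrow> nat \<Rightarrow> nat \<Rightarrow> real) \<Rightarrow> (nat \<Rightarrow> real) \<Rightarrow> nat \<Rightarrow> nat \<Rightarrow> real" where
  "Pq K P q a s = (\<Sum>j\<in>{1..K}. P a s j * q j)"

definition hpay :: "nat \<Rightarrow> (nat \<Rightarrow> nat \<Rightarrow> nat \<Rightarrow> real) \<Rightarrow> (nat \<Rightarrow> real) \<Rightarrow> ('x \<Rightarrow> real \<Rightarrow> 'x)
    \<Rightarrow> ('x \<Rightarrow> real \<Rightarrow> real) \<Rightarrow> ('x \<Rightarrow> real) \<Rightarrow> (nat \<Rightarrow> nat \<Rightarrow> real)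
    \<Rightarrow> 'x \<Rightarrow> nat \<Rightarrow> nat \<Rightarrow> real \<Rightarrow> real" where
  "hpay K P q F \<sigma>0 \<sigma>1 g0 x s i u =
     Pq K P q i s * Sig \<sigma>0 \<sigma>1 g0 x s (F x u) u i
     + (1 - Pq K P q i s) * Sig \<sigma>0 \<sigma>1 g0 x s (F x 0) u i"

text \<open>Unit unit_simplex S_{N-1} (only the coordinates 1..N matter).\<close>
definition unit_simplex :: "nat \<Rightarrow> (nat \<Rightarrow> real) set" where
  "unit_simplex N = {p. (\<forall>a\<in>{1..N}. 0 \<le> p a) \<and> (\<Sum>a\<in>{1..N}. p a) = 1}"

definition payoff :: "nat \<Rightarrow> (nat \<Rightarrow> real \<Rightarrow> real) \<Rightarrow> (nat \<Rightarrow> real) \<Rightarrow> real \<Rightarrow> real" where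
  "payoff N h p u = (\<Sum>a\<in>{1..N}. p a * h a u)"

definition saddle_point :: "nat \<Rightarrow> (nat \<Rightarrow> real \<Rightarrow> real) \<Rightarrow> real \<Rightarrow> (nat \<Rightarrow> real) \<Rightarrow> bool" where
  "saddle_point N h us ps \<longleftrightarrow> ps \<in> unit_simplex N \<and>
     (\<forall>p\<in>unit_simplex N. payoff N h p us \<le> payoff N h ps us) \<and>
     (\<forall>u. payoff N h ps us \<le> payoff N h ps u)"

definition non_pure :: "nat \<Rightarrow> (nat \<Rightarrow> real) \<Rightarrow> bool" where
  "non_pure N p \<longleftrightarrow> card {a\<in>{1..N}. 0 < p a} \<ge> 2"

definition supported_on :: "nat \<Rightarrow> (nat \<Rightarrow> real) \<Rightarrow> nat set \<Rightarrow> bool" where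
  "supported_on N p G \<longleftrightarrow> (\<forall>a\<in>{1..N}. a \<notin> G \<longrightarrow> p a = 0)"

end

theory Submission
  imports Defs
begin

text \<open>Each payoff \<open>h\<^sup>x\<^sup>,\<^sup>s\<^sub>a\<close> is a convex combination, with weight \<open>(P(a) q)\<^sub>s \<in> [0,1]\<close>,
  of two convex functions, hence convex and differentiable off \<open>U\<^sup>d\<close>.
  For a mixed strategy \<open>l\<close> on \<open>a\<^sub>1\<close> and \<open>1 - l\<close> on \<open>a\<^sub>2\<close> the expected payoff
  \<open>l h\<^sub>a\<^sub>1 + (1 - l) h\<^sub>a\<^sub>2\<close> is convex, so by the tangent inequality it is minimised at \<open>u\<close>
  exactly when \<open>l h\<^sub>a\<^sub>1'(u) + (1 - l) h\<^sub>a\<^sub>2'(u) = 0\<close>; such an \<open>l \<in> (0,1)\<close> exists iff the two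
  slopes have opposite signs or both vanish. The jammer cannot improve on the mixture when
  \<open>h\<^sub>a\<^sub>1(u) = h\<^sub>a\<^sub>2(u)\<close> dominates all other payoffs, which gives (i); conversely, at a
  saddle point with both weights positive the equalisation \<open>h\<^sub>a\<^sub>1(u) = h\<^sub>a\<^sub>2(u)\<close> is forced
  by comparing with the two pure strategies, and stationarity of the mixture gives (ii).\<close>

lemma slopes_cancel_iff:
  fixes d1 d2 :: real
  shows "(\<exists>l. 0 < l \<and> l < 1 \<and> l * d1 + (1 - l) * d2 = 0) \<longleftrightarrow> d1 * d2 < 0 \<or> (d1 = 0 \<and> d2 = 0)"
proof
  assume "\<exists>l. 0 < l \<and> l < 1 \<and> l * d1 + (1 - l) * d2 = 0"
  then obtain l where l: "0 < l" "l < 1" "l * d1 + (1 - l) * d2 = 0" by blast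
  then have "(1 - l) * d2 = - (l * d1)" by linarith
  then have "(1 - l) * (d1 * d2) = - l * d1 * d1"
    by (metis mult.left_commute mult_minus_left mult_minus_right mult.assoc)
  show "d1 * d2 < 0 \<or> (d1 = 0 \<and> d2 = 0)"
  proof (cases "d1 = 0")
    case True
    with l show ?thesis by simp
  next
    case False
    then have "l * d1 * d1 > 0"
      using l(1) by (auto simp: mult.assoc zero_less_mult_iff linorder_neq_iff)
    then have "(1 - l) * (d1 * d2) < 0" using \<open>(1 - l) * (d1 * d2) = - l * d1 * d1\<close> by simp
    with l(2) show ?thesis by (simp add: mult_less_0_iff)
  qed
next
  assume d: "d1 * d2 < 0 \<or> (d1 = 0 \<and> d2 = 0)"
  show "\<exists>l. 0 < l \<and> l < 1 \<and> l * d1 + (1 - l) * d2 = 0"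
  proof (cases "d1 = d2")
    case True
    with d show ?thesis by (intro exI[of _ "1/2"]) (auto simp: mult_less_0_iff)
  next
    case False
    with d have "d1 < 0 \<and> 0 < d2 \<or> 0 < d1 \<and> d2 < 0" by (auto simp: mult_less_0_iff)
    then show ?thesis by (intro exI[of _ "d2 / (d2 - d1)"]) (auto simp: field_simps)
  qed
qed

lemma sum_supported_on_pair:
  assumes "supported_on N p {a1, a2}" "a1 \<in> {1..N}" "a2 \<in> {1..N}" "a1 \<noteq> a2"
  shows "(\<Sum>a\<in>{1..N}. p a * g a) = p a1 * g a1 + p a2 * g a2"
proof -
  have "(\<Sum>a\<in>{1..N}. p a * g a) = (\<Sum>a\<in>{a1, a2}. p a * g a)"
    by (rule sum.mono_neutral_right) (use assms in \<open>auto simp: supported_on_def\<close>)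
  then show ?thesis using assms(4) by simp
qed

lemma payoff_supported_on_pair:
  assumes "supported_on N p {a1, a2}" "a1 \<in> {1..N}" "a2 \<in> {1..N}" "a1 \<noteq> a2"
  shows "payoff N h p u = p a1 * h a1 u + p a2 * h a2 u"
  unfolding payoff_def using sum_supported_on_pair[OF assms] .

lemma unit_simplex_supported_on_pair:
  assumes "supported_on N p {a1, a2}" "a1 \<in> {1..N}" "a2 \<in> {1..N}" "a1 \<noteq> a2"
  shows "p \<in> unit_simplex N \<longleftrightarrow> 0 \<le> p a1 \<and> 0 \<le> p a2 \<and> p a1 + p a2 = 1"
  using sum_supported_on_pair[OF assms, of "\<lambda>_. 1"] assms
  by (auto simp: unit_simplex_def supported_on_def)

lemma non_pure_supported_on_pair:
  assumes "non_pure N p" "supported_on N p {a1, a2}"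
  shows "0 < p a1" "0 < p a2"
proof -
  have "{a \<in> {1..N}. 0 < p a} \<subseteq> {a \<in> {a1, a2}. 0 < p a}"
    using assms(2) by (auto simp: supported_on_def)
  then have "card {a \<in> {1..N}. 0 < p a} \<le> card {a \<in> {a1, a2}. 0 < p a}"
    by (intro card_mono) auto
  then have two: "2 \<le> card {a \<in> {a1, a2}. 0 < p a}"
    using assms(1) unfolding non_pure_def by linarith
  have "0 < p b" if "{a1, a2} = {b, c}" for b c
  proof (rule ccontr)
    assume "\<not> 0 < p b"
    then have "{a \<in> {a1, a2}. 0 < p a} \<subseteq> {c}" using that by auto
    then have "card {a \<in> {a1, a2}. 0 < p a} \<le> 1" using card_mono[of "{c}"] by fastforce
    with two show False by simp
  qed
  then show "0 < p a1" "0 < p a2" by (auto simp: insert_commute)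
qed

definition two_point_strategy :: "nat \<Rightarrow> nat \<Rightarrow> real \<Rightarrow> nat \<Rightarrow> real" where
  "two_point_strategy a1 a2 l a = (if a = a1 then l else if a = a2 then 1 - l else 0)"

lemma two_point_strategy_simps:
  assumes "a1 \<noteq> a2"
  shows "two_point_strategy a1 a2 l a1 = l" "two_point_strategy a1 a2 l a2 = 1 - l"
  using assms by (auto simp: two_point_strategy_def)

lemma supported_on_two_point_strategy: "supported_on N (two_point_strategy a1 a2 l) {a1, a2}"
  by (simp add: supported_on_def two_point_strategy_def)

lemma two_point_strategy_in_unit_simplex:
  assumes "a1 \<in> {1..N}" "a2 \<in> {1..N}" "a1 \<noteq> a2" "0 \<le> l" "l \<le> 1"
  shows "two_point_strategy a1 a2 l \<in> unit_simplex N"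
  using unit_simplex_supported_on_pair[OF supported_on_two_point_strategy assms(1-3)]
  by (simp add: assms two_point_strategy_simps)

lemma payoff_two_point_strategy:
  assumes "a1 \<in> {1..N}" "a2 \<in> {1..N}" "a1 \<noteq> a2"
  shows "payoff N h (two_point_strategy a1 a2 l) u = l * h a1 u + (1 - l) * h a2 u"
  by (simp add: payoff_supported_on_pair[OF supported_on_two_point_strategy assms]
      two_point_strategy_simps[OF assms(3)])

lemma payoff_le_max_payoff:
  assumes "p \<in> unit_simplex N" "\<forall>a\<in>{1..N}. h a u \<le> M"
  shows "payoff N h p u \<le> M"
proof -
  have "payoff N h p u \<le> (\<Sum>a\<in>{1..N}. p a * M)"
    unfolding payoff_def using assms by (intro sum_mono mult_left_mono) (auto simp: unit_simplex_def)
  also have "\<dots> = M" using assms(1) by (simp add: unit_simplex_def sum_distrib_right[symmetric])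
  finally show ?thesis .
qed

lemma saddle_point_of_equalizer:
  fixes h :: "nat \<Rightarrow> real \<Rightarrow> real"
  assumes a12: "a1 \<in> {1..N}" "a2 \<in> {1..N}" "a1 \<noteq> a2"
    and convex: "convex_on UNIV (h a1)" "convex_on UNIV (h a2)"
    and deriv: "(h a1 has_real_derivative d1) (at u)" "(h a2 has_real_derivative d2) (at u)"
    and equal: "h a1 u = h a2 u"
    and dominant: "\<forall>a\<in>{1..N} - {a1, a2}. h a u \<le> h a1 u"
    and slopes: "d1 * d2 < 0 \<or> (d1 = 0 \<and> d2 = 0)"
  shows "\<exists>p. saddle_point N h u p \<and> non_pure N p \<and> supported_on N p {a1, a2}"
proof -
  obtain l where l: "0 < l" "l < 1" "l * d1 + (1 - l) * d2 = 0"
    using slopes slopes_cancel_iff by blast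
  define p where "p = two_point_strategy a1 a2 l"
  have simplex: "p \<in> unit_simplex N"
    unfolding p_def using a12 l by (intro two_point_strategy_in_unit_simplex) auto
  have payoff_p: "payoff N h p v = l * h a1 v + (1 - l) * h a2 v" for v
    unfolding p_def using payoff_two_point_strategy[OF a12] .
  have tangent: "h a u + d * (v - u) \<le> h a v" if "convex_on UNIV (h a)"
      "(h a has_real_derivative d) (at u)" for a d v
    using convex_on_imp_above_tangent[of UNIV "h a" u v d] that by simp
  have "l * (h a1 u + d1 * (v - u)) + (1 - l) * (h a2 u + d2 * (v - u))
          \<le> l * h a1 v + (1 - l) * h a2 v" for v
    using l tangent[OF convex(1) deriv(1), of v] tangent[OF convex(2) deriv(2), of v]
    by (intro add_mono mult_left_mono) auto
  moreover have "l * (h a1 u + d1 * (v - u)) + (1 - l) * (h a2 u + d2 * (v - u))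
          = l * h a1 u + (1 - l) * h a2 u + (l * d1 + (1 - l) * d2) * (v - u)" for v
    by (simp add: algebra_simps)
  ultimately have min: "\<forall>v. payoff N h p u \<le> payoff N h p v"
    using l(3) by (simp add: payoff_p)
  have saddle_value: "payoff N h p u = h a1 u"
    using equal by (simp add: payoff_p algebra_simps)
  have "\<forall>a\<in>{1..N}. h a u \<le> h a1 u" using dominant equal by auto
  then have max: "\<forall>p'\<in>unit_simplex N. payoff N h p' u \<le> payoff N h p u"
    using payoff_le_max_payoff saddle_value by metis
  have "{a \<in> {1..N}. 0 < p a} = {a1, a2}"
    using a12 l by (auto simp: p_def two_point_strategy_def)
  then have "non_pure N p" using a12 by (simp add: non_pure_def)
  then show ?thesis using simplex min max supported_on_two_point_strategy
    unfolding saddle_point_def p_def by blast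
qed

lemma equalizer_of_saddle_point:
  fixes h :: "nat \<Rightarrow> real \<Rightarrow> real"
  assumes a12: "a1 \<in> {1..N}" "a2 \<in> {1..N}" "a1 \<noteq> a2"
    and deriv: "(h a1 has_real_derivative d1) (at u)" "(h a2 has_real_derivative d2) (at u)"
    and saddle: "saddle_point N h u p" and np: "non_pure N p" and supp: "supported_on N p {a1, a2}"
  shows "h a1 u = h a2 u \<and> (d1 * d2 < 0 \<or> (d1 = 0 \<and> d2 = 0))"
proof -
  have pos: "0 < p a1" "0 < p a2" using non_pure_supported_on_pair[OF np supp] by auto
  have sum1: "p a1 + p a2 = 1"
    using saddle unit_simplex_supported_on_pair[OF supp a12] by (simp add: saddle_point_def)
  have payoff_p: "payoff N h p v = p a1 * h a1 v + p a2 * h a2 v" for v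
    using payoff_supported_on_pair[OF supp a12] .
  have pure: "payoff N h (two_point_strategy a1 a2 l) u \<le> payoff N h p u" if "l \<in> {0, 1}" for l
    using saddle two_point_strategy_in_unit_simplex[OF a12, of l] that
    by (auto simp: saddle_point_def)
  have "payoff N h p u = (p a1 + p a2) * h a1 u - p a2 * (h a1 u - h a2 u)"
    "payoff N h p u = (p a1 + p a2) * h a2 u - p a1 * (h a2 u - h a1 u)"
    by (simp_all add: payoff_p algebra_simps)
  moreover have "h a1 u \<le> payoff N h p u" "h a2 u \<le> payoff N h p u"
    using pure[of 1] pure[of 0] by (simp_all add: payoff_two_point_strategy[OF a12])
  ultimately have "p a2 * (h a1 u - h a2 u) \<le> 0" "p a1 * (h a2 u - h a1 u) \<le> 0"
    unfolding sum1 by linarith+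
  then have equal: "h a1 u = h a2 u" using pos by (simp add: mult_le_0_iff)
  have "((\<lambda>v. p a1 * h a1 v + p a2 * h a2 v) has_real_derivative p a1 * d1 + p a2 * d2) (at u)"
    using deriv by (auto intro!: derivative_eq_intros)
  moreover have "\<forall>v. \<bar>u - v\<bar> < 1 \<longrightarrow> p a1 * h a1 u + p a2 * h a2 u \<le> p a1 * h a1 v + p a2 * h a2 v"
    using saddle by (simp add: saddle_point_def payoff_p)
  ultimately have "p a1 * d1 + p a2 * d2 = 0" by (rule DERIV_local_min[OF _ zero_less_one])
  moreover have "p a2 = 1 - p a1" using sum1 by simp
  ultimately have "\<exists>l. 0 < l \<and> l < 1 \<and> l * d1 + (1 - l) * d2 = 0"
    using pos by (intro exI[of _ "p a1"]) auto
  then have "d1 * d2 < 0 \<or> (d1 = 0 \<and> d2 = 0)" using slopes_cancel_iff by blast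
  with equal show ?thesis by blast
qed

lemma Pq_in_unit_interval:
  assumes "\<forall>j\<in>{1..K}. 0 \<le> P a s j" "(\<Sum>j\<in>{1..K}. P a s j) = 1"
    and "\<forall>j\<in>{1..K}. 0 \<le> q j \<and> q j \<le> 1"
  shows "0 \<le> Pq K P q a s \<and> Pq K P q a s \<le> 1"
proof -
  have "0 \<le> Pq K P q a s" unfolding Pq_def using assms by (auto intro!: sum_nonneg)
  moreover have "Pq K P q a s \<le> (\<Sum>j\<in>{1..K}. P a s j)"
    unfolding Pq_def using assms by (intro sum_mono) (simp add: mult_left_le)
  ultimately show ?thesis using assms(2) by simp
qed

lemma hpay_eq:
  "hpay K P q F \<sigma>0 \<sigma>1 g0 x s a = (\<lambda>u. Pq K P q a s * Sig \<sigma>0 \<sigma>1 g0 x s (F x u) u a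
     + (1 - Pq K P q a s) * Sig \<sigma>0 \<sigma>1 g0 x s (F x 0) u a)"
  by (simp add: fun_eq_iff hpay_def)

lemma convex_on_hpay:
  assumes "0 \<le> Pq K P q a s" "Pq K P q a s \<le> 1"
    and "convex_on UNIV (\<lambda>u. Sig \<sigma>0 \<sigma>1 g0 x s (F x u) u a)"
    and "convex_on UNIV (\<lambda>u. Sig \<sigma>0 \<sigma>1 g0 x s (F x 0) u a)"
  shows "convex_on UNIV (hpay K P q F \<sigma>0 \<sigma>1 g0 x s a)"
  unfolding hpay_eq using assms by (intro convex_on_add convex_on_cmul) auto

lemma hpay_C1_differentiable_on:
  assumes "(\<lambda>u. Sig \<sigma>0 \<sigma>1 g0 x s (F x u) u a) C1_differentiable_on A"
    and "(\<lambda>u. Sig \<sigma>0 \<sigma>1 g0 x s (F x 0) u a) C1_differentiable_on A"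
  shows "hpay K P q F \<sigma>0 \<sigma>1 g0 x s a C1_differentiable_on A"
  unfolding hpay_eq using assms by (intro derivative_intros)

theorem theorem3:
  fixes N K :: nat
    and P :: "nat \<Rightarrow> nat \<Rightarrow> nat \<Rightarrow> real" and q :: "nat \<Rightarrow> real"
    and F :: "real ^ 'n \<Rightarrow> real \<Rightarrow> real ^ 'n"
    and \<sigma>0 :: "real ^ 'n \<Rightarrow> real \<Rightarrow> real" and \<sigma>1 :: "real ^ 'n \<Rightarrow> real"
    and g0 :: "nat \<Rightarrow> nat \<Rightarrow> real"
    and Ud :: "real ^ 'n \<Rightarrow> real set"
    and x :: "real ^ 'n" and s a1 a2 :: nat
  assumes P_nonneg: "\<forall>a\<in>{1..N}. \<forall>i\<in>{1..K}. \<forall>j\<in>{1..K}. 0 \<le> P a i j"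
    and P_rows: "\<forall>a\<in>{1..N}. \<forall>i\<in>{1..K}. (\<Sum>j\<in>{1..K}. P a i j) = 1"
    and q_range: "\<forall>j\<in>{1..K}. 0 \<le> q j \<and> q j \<le> 1"
    and s_in: "s \<in> {1..K}"
    and a1_in: "a1 \<in> {1..N}" and a2_in: "a2 \<in> {1..N}" and a12: "a1 \<noteq> a2"
    and convex1: "\<forall>y. \<forall>a\<in>{1..N}. convex_on UNIV (\<lambda>u. Sig \<sigma>0 \<sigma>1 g0 y s (F y u) u a)"
    and convex0: "\<forall>y. \<forall>a\<in>{1..N}. convex_on UNIV (\<lambda>u. Sig \<sigma>0 \<sigma>1 g0 y s (F y 0) u a)"
    and Ud_finite: "\<forall>y. finite (Ud y)"
    and C1_1: "\<forall>y. \<forall>a\<in>{1..N}. (\<lambda>u. Sig \<sigma>0 \<sigma>1 g0 y s (F y u) u a) C1_differentiable_on (- Ud y)"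
    and C1_0: "\<forall>y. \<forall>a\<in>{1..N}. (\<lambda>u. Sig \<sigma>0 \<sigma>1 g0 y s (F y 0) u a) C1_differentiable_on (- Ud y)"
  shows "((\<exists>ub. ub \<notin> Ud x
            \<and> hpay K P q F \<sigma>0 \<sigma>1 g0 x s a1 ub = hpay K P q F \<sigma>0 \<sigma>1 g0 x s a2 ub
            \<and> (\<forall>i\<in>{a1, a2}. \<forall>a\<in>{1..N} - {a1, a2}.
                 hpay K P q F \<sigma>0 \<sigma>1 g0 x s i ub \<ge> hpay K P q F \<sigma>0 \<sigma>1 g0 x s a ub)
            \<and> (deriv (hpay K P q F \<sigma>0 \<sigma>1 g0 x s a1) ub * deriv (hpay K P q F \<sigma>0 \<sigma>1 g0 x s a2) ub < 0
               \<or> (deriv (hpay K P q F \<sigma>0 \<sigma>1 g0 x s a1) ub = 0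
                  \<and> deriv (hpay K P q F \<sigma>0 \<sigma>1 g0 x s a2) ub = 0)))
          \<longrightarrow> (\<exists>us ps. us \<notin> Ud x \<and> saddle_point N (hpay K P q F \<sigma>0 \<sigma>1 g0 x s) us ps
                  \<and> non_pure N ps \<and> supported_on N ps {a1, a2}))
       \<and> ((\<exists>us ps. us \<notin> Ud x \<and> saddle_point N (hpay K P q F \<sigma>0 \<sigma>1 g0 x s) us ps
                  \<and> non_pure N ps \<and> supported_on N ps {a1, a2})
          \<longrightarrow> (\<exists>ub. ub \<notin> Ud x
            \<and> hpay K P q F \<sigma>0 \<sigma>1 g0 x s a1 ub = hpay K P q F \<sigma>0 \<sigma>1 g0 x s a2 ub
            \<and> (deriv (hpay K P q F \<sigma>0 \<sigma>1 g0 x s a1) ub * deriv (hpay K P q F \<sigma>0 \<sigma>1 g0 x s a2) ub < 0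
               \<or> (deriv (hpay K P q F \<sigma>0 \<sigma>1 g0 x s a1) ub = 0
                  \<and> deriv (hpay K P q F \<sigma>0 \<sigma>1 g0 x s a2) ub = 0))))"
proof -
  define h where "h = hpay K P q F \<sigma>0 \<sigma>1 g0 x s"
  have convex: "convex_on UNIV (h a)" if "a \<in> {1..N}" for a
    using Pq_in_unit_interval[of K P a s q] P_nonneg P_rows q_range s_in convex1 convex0 that
    unfolding h_def by (intro convex_on_hpay) auto
  have "h a C1_differentiable_on - Ud x" if "a \<in> {1..N}" for a
    using C1_1 C1_0 that unfolding h_def by (intro hpay_C1_differentiable_on) auto
  then have deriv: "(h a has_real_derivative deriv (h a) u) (at u)" if "a \<in> {1..N}" "u \<notin> Ud x" for a u
    using that by (simp add: C1_differentiable_on_eq DERIV_deriv_iff_real_differentiable)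
  show ?thesis
    unfolding h_def[symmetric]
  proof (intro conjI impI; elim exE conjE)
    fix u assume "u \<notin> Ud x" "h a1 u = h a2 u"
      "\<forall>i\<in>{a1, a2}. \<forall>a\<in>{1..N} - {a1, a2}. h a u \<le> h i u"
      "deriv (h a1) u * deriv (h a2) u < 0 \<or> deriv (h a1) u = 0 \<and> deriv (h a2) u = 0"
    then show "\<exists>us ps. us \<notin> Ud x \<and> saddle_point N h us ps \<and> non_pure N ps \<and> supported_on N ps {a1, a2}"
      using saddle_point_of_equalizer[OF a1_in a2_in a12 convex[OF a1_in] convex[OF a2_in]
          deriv[OF a1_in] deriv[OF a2_in]] by blast
  next
    fix u p assume "u \<notin> Ud x" "saddle_point N h u p" "non_pure N p" "supported_on N p {a1, a2}"
    then show "\<exists>ub. ub \<notin> Ud x \<and> h a1 ub = h a2 ub \<and>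
        (deriv (h a1) ub * deriv (h a2) ub < 0 \<or> deriv (h a1) ub = 0 \<and> deriv (h a2) ub = 0)"
      using equalizer_of_saddle_point[OF a1_in a2_in a12 deriv[OF a1_in] deriv[OF a2_in]] by blast
  qed
qed

end
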